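(* Let $d\ge 1$ and let $f(t)=1+\sum_{i=1}^{d}\binom{x_i}{i}t^{i}$ be a polynomial of degree $d$ with positive real coefficients, where $x_1,\dots,x_d$ are real numbers with $x_i\ge i-1$. Suppose $f(t)$ is ultra log-concave and $x_d\ge d$. Then $x_1\ge x_2\ge\cdots\ge x_d$.
   Context: For a real number $x$ and an integer $k\ge 0$, $\binom{x}{k}=\frac{x(x-1)\cdots(x-k+1)}{k!}$. For every integer $k\ge1$ and real $y>0$ there is a unique real $x\ge k-1$ with $y=\binom{x}{k}$, so the $x_i$ are uniquely determined by the coefficients. A polynomial $a_0+a_1t+\cdots+a_dt^d$ of degree $d$ is called ultra log-concave if $\big(a_i/\binom{d}{i}\big)^2\ge \frac{a_{i-1}}{\binom{d}{i-1}}\cdot\frac{a_{i+1}}{\binom{d}{i+1}}$ for all $1\le i\le d-1$. *)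

theory Defs
  imports "HOL-Analysis.Analysis" "HOL-Computational_Algebra.Polynomial"
begin

definition ultra_log_concave :: "real poly \<Rightarrow> bool" where
  "ultra_log_concave f \<longleftrightarrow>
     (let d = degree f in
      \<forall>i. 1 \<le> i \<and> i \<le> d - 1 \<longrightarrow>
        (coeff f i / real (d choose i))^2 \<ge>
        (coeff f (i - 1) / real (d choose (i - 1))) * (coeff f (i + 1) / real (d choose (i + 1))))"

definition binom_poly :: "nat \<Rightarrow> (nat \<Rightarrow> real) \<Rightarrow> real poly" where
  "binom_poly d x = 1 + (\<Sum>i=1..d. monom (x i gchoose i) i)"

end

theory Submission
  imports Defs
begin

text \<open>Write b(i) = binom(x(i), i) / binom(d, i), so b(0) = 1; ultra log-concavity is
  log-concavity of b, which yields b(i+1)^i \<le> b(i)^(i+1). Suppose y = x(i+1) \<ge> d. Then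
  binom(y, k) / binom(d, k) is a product of the ratios (y - j) / (d - j), each at most
  c = (y - i) / (d - i) for j \<le> i; so g = binom(y, i) / binom(d, i) satisfies g \<le> c^i and
  b(i+1) = g c, whence g^(i+1) \<le> (g c)^i \<le> b(i)^(i+1), i.e. binom(y, i) \<le> binom(x(i), i).
  As binom(-, i) is strictly increasing on [i - 1, \<infinity>), this forces x(i) \<ge> x(i+1) \<ge> d,
  and descending induction from x(d) \<ge> d gives the whole chain.\<close>

lemma gbinomial_Suc_eq:
  "(a::'a::field_char_0) gchoose Suc k = (a gchoose k) * (a - of_nat k) / of_nat (Suc k)"
proof -
  have "a * (a gchoose k) = of_nat k * (a gchoose k) + of_nat (Suc k) * (a gchoose Suc k)"
    by (rule gbinomial_mult_1)
  then show ?thesis by (simp add: field_simps del: of_nat_Suc)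
qed

lemma gbinomial_nonneg:
  fixes a :: "'a::linordered_field"
  assumes "of_nat k - 1 \<le> a"
  shows "0 \<le> a gchoose k"
proof -
  have "of_nat j \<le> a" if "j < k" for j
  proof -
    have "of_nat (Suc j) \<le> (of_nat k :: 'a)" using that by (simp only: of_nat_le_iff)
    then show ?thesis using assms by simp
  qed
  then show ?thesis unfolding gbinomial_prod_rev by (auto intro!: prod_nonneg divide_nonneg_pos)
qed

lemma gbinomial_strict_mono:
  fixes a b :: "'a::linordered_field"
  assumes "k \<ge> 1" "of_nat k - 1 \<le> a" "a < b"
  shows "a gchoose k < b gchoose k"
proof -
  have "of_nat i \<le> a" "of_nat i < b" if "i < k" for i
  proof -
    have "of_nat (Suc i) \<le> (of_nat k :: 'a)" using that by (simp only: of_nat_le_iff)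
    then show "of_nat i \<le> a" "of_nat i < b" using assms by simp_all
  qed
  then have "(\<Prod>i=0..<k. a - of_nat i) < (\<Prod>i=0..<k. b - of_nat i)"
    by (intro prod_mono_strict[where i=0]) (use assms in auto)
  then show ?thesis unfolding gbinomial_prod_rev by (simp add: divide_strict_right_mono)
qed

lemma log_concave_power_bound:
  fixes b :: "nat \<Rightarrow> 'a::linordered_idom"
  assumes pos: "\<And>j. j \<le> n \<Longrightarrow> b j > 0"
    and log_concave: "\<And>j. 1 \<le> j \<Longrightarrow> j < n \<Longrightarrow> b (j - 1) * b (j + 1) \<le> b j ^ 2"
  shows "i < n \<Longrightarrow> b (i + 1) ^ i * b 0 \<le> b i ^ (i + 1)"
proof (induction i)
  case 0
  then show ?case by simp
next
  case (Suc i)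
  have IH: "b (i + 1) ^ i * b 0 \<le> b i ^ (i + 1)" using Suc by simp
  have lc: "b i * b (i + 2) \<le> b (i + 1) ^ 2" using log_concave[of "i + 1"] Suc.prems by simp
  have b_pos: "b 0 > 0" "b i > 0" "b (i + 1) > 0" "b (i + 2) > 0" using pos Suc.prems by auto
  have "b (i + 2) ^ (i + 1) * b 0 * b i ^ (i + 1) = (b i * b (i + 2)) ^ (i + 1) * b 0"
    by (simp add: power_mult_distrib)
  also have "\<dots> \<le> (b (i + 1) ^ 2) ^ (i + 1) * b 0"
    using lc b_pos by (intro mult_right_mono power_mono) simp_all
  also have "\<dots> = b (i + 1) ^ (i + 2) * (b (i + 1) ^ i * b 0)"
    by (simp add: power_mult[symmetric] power_add[symmetric] mult.assoc mult_2)
  also have "\<dots> \<le> b (i + 1) ^ (i + 2) * b i ^ (i + 1)"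
    using IH b_pos by (simp add: mult_left_mono)
  finally have "b (i + 2) ^ (i + 1) * b 0 \<le> b (i + 1) ^ (i + 2)"
    using b_pos by (simp add: mult_le_cancel_right)
  then show ?case by (simp add: add.commute)
qed

lemma gbinomial_over_binomial_Suc:
  fixes y :: real
  assumes "k < d"
  shows "(y gchoose Suc k) / real (d choose Suc k)
           = (y gchoose k) / real (d choose k) * ((y - k) / (real d - k))"
proof -
  have "real d - real k > 0" "real (d choose k) > 0" using assms by simp_all
  then show ?thesis
    using gbinomial_Suc_eq[of "real d" k]
    unfolding gbinomial_Suc_eq binomial_gbinomial
    by (simp add: field_simps del: of_nat_Suc)
qed

lemma gbinomial_over_binomial_le_power:
  fixes y :: real
  assumes "real d \<le> y" "i < d"
  shows "k \<le> i \<Longrightarrow> (y gchoose k) / real (d choose k) \<le> ((y - i) / (real d - i)) ^ k"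
proof (induction k)
  case 0
  then show ?case by simp
next
  case (Suc k)
  have "k < d" using Suc assms by simp
  then have dk: "real d - real k > 0" and choose_pos: "real (d choose k) > 0" by simp_all
  have "(y gchoose k) \<ge> 0" using \<open>k < d\<close> assms by (simp add: gbinomial_nonneg)
  have ratio_nonneg: "(y - k) / (real d - k) \<ge> 0" using \<open>k < d\<close> assms by simp
  have "(y - k) * (real d - i) \<le> (y - i) * (real d - k)"
  proof -
    have "(real i - real k) * (y - real d) \<ge> 0" using Suc.prems assms by simp
    then show ?thesis by (simp add: algebra_simps)
  qed
  then have ratio_le: "(y - k) / (real d - k) \<le> (y - i) / (real d - i)"
    using dk assms by (simp add: divide_simps)
  have "(y gchoose Suc k) / real (d choose Suc k)
      = (y gchoose k) / real (d choose k) * ((y - k) / (real d - k))"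
    using \<open>k < d\<close> by (rule gbinomial_over_binomial_Suc)
  also have "\<dots> \<le> ((y - i) / (real d - i)) ^ k * ((y - i) / (real d - i))"
    using Suc ratio_le ratio_nonneg \<open>(y gchoose k) \<ge> 0\<close> choose_pos by (intro mult_mono) auto
  finally show ?case by (simp add: mult.commute)
qed

lemma le_of_normalized_gbinomial_power_le:
  fixes a y :: real
  assumes "1 \<le> i" "i < d" "real i - 1 \<le> a" "real d \<le> y"
    and power_le: "((y gchoose (i + 1)) / real (d choose (i + 1))) ^ i
                    \<le> ((a gchoose i) / real (d choose i)) ^ (i + 1)"
  shows "y \<le> a"
proof (rule ccontr)
  assume "\<not> y \<le> a"
  define g where "g = (y gchoose i) / real (d choose i)"
  define c where "c = (y - i) / (real d - i)"
  have choose_pos: "real (d choose i) > 0" using \<open>i < d\<close> by simp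
  have "g \<ge> 0" unfolding g_def using assms by (simp add: gbinomial_nonneg)
  have "g \<le> c ^ i"
    using gbinomial_over_binomial_le_power[of d y i i] assms unfolding g_def c_def by simp
  have "g ^ Suc i = g ^ i * g" by simp
  also have "\<dots> \<le> g ^ i * c ^ i"
    using \<open>g \<le> c ^ i\<close> \<open>g \<ge> 0\<close> by (intro mult_left_mono) simp_all
  also have "\<dots> = ((y gchoose (i + 1)) / real (d choose (i + 1))) ^ i"
    unfolding Suc_eq_plus1[symmetric] gbinomial_over_binomial_Suc[OF \<open>i < d\<close>] g_def c_def
    by (rule power_mult_distrib[symmetric])
  also have "\<dots> \<le> ((a gchoose i) / real (d choose i)) ^ Suc i"
    using power_le by simp
  finally have "g ^ Suc i \<le> ((a gchoose i) / real (d choose i)) ^ Suc i" .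
  moreover have "(a gchoose i) \<ge> 0" using assms by (simp add: gbinomial_nonneg)
  ultimately have "g \<le> (a gchoose i) / real (d choose i)"
    using choose_pos by (auto intro: power_le_imp_le_base divide_nonneg_pos)
  then have "(y gchoose i) \<le> (a gchoose i)"
    unfolding g_def using choose_pos by (simp add: divide_le_cancel)
  moreover have "(a gchoose i) < (y gchoose i)"
    using gbinomial_strict_mono[of i a y] assms \<open>\<not> y \<le> a\<close> by simp
  ultimately show False by simp
qed

lemma antitone_on_interval_by_downward_step:
  fixes f :: "nat \<Rightarrow> 'a::linorder"
  assumes threshold: "c \<le> f n"
    and descent: "\<And>k. m \<le> k \<Longrightarrow> k < n \<Longrightarrow> c \<le> f (Suc k) \<Longrightarrow> f (Suc k) \<le> f k"
    and "m \<le> i" "i \<le> j" "j \<le> n"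
  shows "f j \<le> f i"
proof -
  have above: "c \<le> f k" if "m \<le> k" "k \<le> n" for k
    using \<open>k \<le> n\<close> threshold
  proof (induction k rule: inc_induct)
    case (step l)
    then show ?case using step.IH descent[of l] \<open>m \<le> k\<close> by (meson order_trans)
  qed
  show ?thesis
    using \<open>i \<le> j\<close>
  proof (induction i rule: inc_induct)
    case (step k)
    have "f (Suc k) \<le> f k" using descent assms(3,5) above[of "Suc k"] step.hyps by simp
    then show ?case using step.IH by simp
  qed simp
qed

lemma coeff_binom_poly:
  "coeff (binom_poly d x) n = (if n = 0 then 1 else if n \<le> d then x n gchoose n else 0)"
  unfolding binom_poly_def by (auto simp: coeff_sum coeff_monom)

lemma ultra_log_concaveD:
  assumes "ultra_log_concave f" "1 \<le> i" "i < degree f"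
  shows "(coeff f (i - 1) / real (degree f choose (i - 1)))
           * (coeff f (i + 1) / real (degree f choose (i + 1)))
         \<le> (coeff f i / real (degree f choose i)) ^ 2"
  using assms unfolding ultra_log_concave_def Let_def by auto

theorem theorem3p1:
  fixes d :: nat and x :: "nat \<Rightarrow> real"
  assumes "d \<ge> 1"
    and "\<And>i. 1 \<le> i \<Longrightarrow> i \<le> d \<Longrightarrow> x i \<ge> real i - 1"
    and "\<And>i. 1 \<le> i \<Longrightarrow> i \<le> d \<Longrightarrow> (x i gchoose i) > 0"
    and "degree (binom_poly d x) = d"
    and "ultra_log_concave (binom_poly d x)"
    and "x d \<ge> real d"
  shows "\<forall>i j. 1 \<le> i \<and> i \<le> j \<and> j \<le> d \<longrightarrow> x i \<ge> x j"
proof -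
  define b where "b j = coeff (binom_poly d x) j / real (d choose j)" for j
  have b_pos: "b j > 0" if "j \<le> d" for j
    using that assms(3)[of j] by (cases "j = 0") (simp_all add: b_def coeff_binom_poly)
  have b_log_concave: "b (j - 1) * b (j + 1) \<le> b j ^ 2" if "1 \<le> j" "j < d" for j
    using ultra_log_concaveD[OF assms(5)] that unfolding b_def assms(4) by simp
  have "x (Suc i) \<le> x i" if "1 \<le> i" "i < d" "real d \<le> x (Suc i)" for i
  proof (rule le_of_normalized_gbinomial_power_le)
    show "((x (Suc i) gchoose (i + 1)) / real (d choose (i + 1))) ^ i
          \<le> ((x i gchoose i) / real (d choose i)) ^ (i + 1)"
      using log_concave_power_bound[OF b_pos b_log_concave \<open>i < d\<close>] that
      by (simp add: b_def coeff_binom_poly)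
  qed (use that assms(2)[of i] in auto)
  then show ?thesis
    using antitone_on_interval_by_downward_step[of "real d" x d 1] assms(6) by auto
qed

end
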